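(* A tree share $\tau\in\mathbb{T}$ is unary if and only if $$\tau\neq\circ\ \wedge\ \forall\tau'\in\mathbb{T}.\ \big(\tau'\bowtie\mathcal{L}\sqsubset\tau\ \leftrightarrow\ \tau'\bowtie\mathcal{R}\sqsubset\tau\big).$$
   Context: A tree share is a finite binary tree whose leaves are labelled $\bullet$ (black) or $\circ$ (white), in canonical form: no subtree has the form $\mathrm{Node}(\bullet,\bullet)$ or $\mathrm{Node}(\circ,\circ)$ (such subtrees are identified with the leaf $\bullet$, resp. $\circ$). $\mathbb{T}$ denotes the set of tree shares. $\tau_1\sqcup\tau_2$ is computed by unfolding both trees (replacing a leaf $\ell$ by $\mathrm{Node}(\ell,\ell)$ as needed) to a common shape, taking Boolean join leafwise ($\bullet$ = true, $\circ$ = false), and refolding to canonical form. $\tau_1\sqsubset\tau_2$ means $\tau_1\sqcup\tau_2=\tau_2$ and $\tau_1\neq\tau_2$. The product $\tau_1\bowtie\tau_2$ is obtained by replacing every $\bullet$ leaf of $\tau_1$ by a copy of $\tau_2$ and refolding to canonical form. $\mathcal{L}=\mathrm{Node}(\bullet,\circ)$, $\mathcal{R}=\mathrm{Node}(\circ,\bullet)$. A unary tree is a tree share with exactly one black leaf. *)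

theory Defs
  imports Main
begin

datatype tree = Lf bool | Nd tree tree

abbreviation black :: tree where "black \<equiv> Lf True"
abbreviation white :: tree where "white \<equiv> Lf False"

fun canonical :: "tree \<Rightarrow> bool" where
  "canonical (Lf b) = True"
| "canonical (Nd l r) = (canonical l \<and> canonical r \<and> \<not> (\<exists>b. l = Lf b \<and> r = Lf b))"

definition tshares :: "tree set" where
  "tshares = {t. canonical t}"

fun mknode :: "tree \<Rightarrow> tree \<Rightarrow> tree" where
  "mknode (Lf a) (Lf b) = (if a = b then Lf a else Nd (Lf a) (Lf b))"
| "mknode l r = Nd l r"

fun norm :: "tree \<Rightarrow> tree" where
  "norm (Lf b) = Lf b"
| "norm (Nd l r) = mknode (norm l) (norm r)"

fun join_raw :: "tree \<Rightarrow> tree \<Rightarrow> tree" where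
  "join_raw (Lf a) (Lf b) = Lf (a \<or> b)"
| "join_raw (Lf a) (Nd l r) = Nd (join_raw (Lf a) l) (join_raw (Lf a) r)"
| "join_raw (Nd l r) (Lf b) = Nd (join_raw l (Lf b)) (join_raw r (Lf b))"
| "join_raw (Nd l r) (Nd l' r') = Nd (join_raw l l') (join_raw r r')"

definition tjoin :: "tree \<Rightarrow> tree \<Rightarrow> tree" where
  "tjoin t1 t2 = norm (join_raw t1 t2)"

definition tsub :: "tree \<Rightarrow> tree \<Rightarrow> bool" where
  "tsub t1 t2 \<longleftrightarrow> tjoin t1 t2 = t2 \<and> t1 \<noteq> t2"

fun bowtie_raw :: "tree \<Rightarrow> tree \<Rightarrow> tree" where
  "bowtie_raw (Lf b) t2 = (if b then t2 else Lf False)"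
| "bowtie_raw (Nd l r) t2 = Nd (bowtie_raw l t2) (bowtie_raw r t2)"

definition bowtie :: "tree \<Rightarrow> tree \<Rightarrow> tree" where
  "bowtie t1 t2 = norm (bowtie_raw t1 t2)"

definition tL :: tree where "tL = Nd black white"
definition tR :: tree where "tR = Nd white black"

fun black_leaves :: "tree \<Rightarrow> nat" where
  "black_leaves (Lf b) = (if b then 1 else 0)"
| "black_leaves (Nd l r) = black_leaves l + black_leaves r"

definition unary :: "tree \<Rightarrow> bool" where
  "unary t \<longleftrightarrow> black_leaves t = 1"

end

theory Submission
  imports Defs
begin

text \<open>Read a tree share as a decision tree on infinite bit streams (False = left,
  True = right); it denotes the set of streams ending in a black leaf, and a canonical tree is
  determined by this set. The order becomes strict inclusion, L and R are the one-bit
  cylinders, and the products of \<tau>' with L and R are the two halves of \<tau>' split by the first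
  bit \<tau>' does not read. Canonical unary trees are exactly the cylinders of finite prefixes.
  Flipping the first unread bit exchanges the two halves, and for a cylinder this shows that one
  half is strictly below it iff the other is. Conversely, a canonical tree that is neither white
  nor a cylinder has a black leaf at some position q@[b] whose sibling is not black, and the
  products of the cylinder of q with L and R are then separated.\<close>

fun paths :: "tree \<Rightarrow> (nat \<Rightarrow> bool) set" where
  "paths (Lf b) = (if b then UNIV else {})"
| "paths (Nd l r) = {f. (\<lambda>n. f (Suc n)) \<in> paths (if f 0 then r else l)}"

fun depth :: "tree \<Rightarrow> (nat \<Rightarrow> bool) \<Rightarrow> nat" where
  "depth (Lf b) f = 0"
| "depth (Nd l r) f = Suc (depth (if f 0 then r else l) (\<lambda>n. f (Suc n)))"

fun cyl :: "bool list \<Rightarrow> tree" where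
  "cyl [] = black"
| "cyl (c # bs) = (if c then Nd white (cyl bs) else Nd (cyl bs) white)"

lemma case_nat_in_paths_Nd:
  "case_nat c f \<in> paths (Nd l r) \<longleftrightarrow> f \<in> paths (if c then r else l)"
  by simp

lemma paths_mknode: "paths (mknode l r) = paths (Nd l r)"
  by (induction l r rule: mknode.induct) auto

lemma paths_norm: "paths (norm t) = paths t"
  by (induction t) (simp_all add: paths_mknode)

lemma canonical_mknode: "canonical l \<Longrightarrow> canonical r \<Longrightarrow> canonical (mknode l r)"
  by (induction l r rule: mknode.induct) auto

lemma canonical_norm: "canonical (norm t)"
  by (induction t) (simp_all add: canonical_mknode)

lemma norm_canonical: "canonical t \<Longrightarrow> norm t = t"
proof (induction t)
  case (Nd l r)
  then show ?case by (cases l; cases r) auto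
qed simp

lemma paths_Lf_unfold: "paths (Lf b) = paths (Nd (Lf b) (Lf b))"
  by auto

lemma paths_Nd_eq_iff:
  "paths (Nd l r) = paths (Nd l' r') \<longleftrightarrow> paths l = paths l' \<and> paths r = paths r'"
proof
  assume eq: "paths (Nd l r) = paths (Nd l' r')"
  have "f \<in> paths (if c then r else l) \<longleftrightarrow> f \<in> paths (if c then r' else l')" for c f
    using eq case_nat_in_paths_Nd by blast
  from this[where c=False] this[where c=True] show "paths l = paths l' \<and> paths r = paths r'"
    by auto
qed simp

lemma canonical_paths_inject:
  "canonical t1 \<Longrightarrow> canonical t2 \<Longrightarrow> paths t1 = paths t2 \<Longrightarrow> t1 = t2"
proof (induction t1 t2 rule: join_raw.induct)
  case (1 a b)
  then show ?case by (cases a; cases b) auto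
next
  case (2 a l r)
  then show ?case by (metis canonical.simps(2) paths_Lf_unfold paths_Nd_eq_iff)
next
  case (3 l r b)
  then show ?case by (metis canonical.simps(2) paths_Lf_unfold paths_Nd_eq_iff)
next
  case (4 l r l' r')
  then show ?case by (metis canonical.simps(2) paths_Nd_eq_iff)
qed

lemma paths_join_raw: "paths (join_raw t1 t2) = paths t1 \<union> paths t2"
  by (induction t1 t2 rule: join_raw.induct) auto

lemma tsub_iff_paths_psubset:
  assumes "canonical t1" "canonical t2"
  shows "tsub t1 t2 \<longleftrightarrow> paths t1 \<subset> paths t2"
proof -
  have "tjoin t1 t2 = t2 \<longleftrightarrow> paths (tjoin t1 t2) = paths t2"
    using canonical_paths_inject[OF canonical_norm assms(2)] by (auto simp: tjoin_def)
  also have "\<dots> \<longleftrightarrow> paths t1 \<subseteq> paths t2"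
    by (auto simp: tjoin_def paths_norm paths_join_raw)
  finally show ?thesis
    using canonical_paths_inject[OF assms] by (auto simp: tsub_def)
qed

lemma depth_paths_local:
  "\<forall>i<depth t f. g i = f i \<Longrightarrow> depth t g = depth t f \<and> (g \<in> paths t \<longleftrightarrow> f \<in> paths t)"
proof (induction t arbitrary: f g)
  case (Nd l r)
  then have "g 0 = f 0" by auto
  with Nd show ?case
    by (cases "f 0") (auto dest!: spec[of _ "Suc _"] Nd.IH[of "\<lambda>n. f (Suc n)" "\<lambda>n. g (Suc n)"])
qed simp

lemma paths_bowtie_raw:
  "f \<in> paths (bowtie_raw t s) \<longleftrightarrow> f \<in> paths t \<and> (\<lambda>n. f (n + depth t f)) \<in> paths s"
  by (induction t arbitrary: f) auto

lemma paths_bowtie_single: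
  "paths (bowtie t (cyl [b])) = {f \<in> paths t. f (depth t f) = b}"
  by (auto simp: bowtie_def paths_norm paths_bowtie_raw split: if_split_asm)

lemma tL_eq_cyl: "tL = cyl [False]" and tR_eq_cyl: "tR = cyl [True]"
  by (simp_all add: tL_def tR_def)

lemma cyl_eq_Lf_iff: "cyl bs = Lf b \<longleftrightarrow> bs = [] \<and> b"
  by (cases bs) auto

lemma canonical_cyl: "canonical (cyl bs)"
  by (induction bs) (auto simp: cyl_eq_Lf_iff)

lemma bowtie_cyl: "bowtie (cyl p) (cyl q) = cyl (p @ q)"
proof -
  have "bowtie_raw (cyl p) (cyl q) = cyl (p @ q)"
    by (induction p) auto
  then show ?thesis by (simp add: bowtie_def norm_canonical canonical_cyl)
qed

lemma paths_cyl: "paths (cyl bs) = {f. \<forall>i<length bs. f i = bs ! i}"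
  by (induction bs) (auto simp: All_less_Suc2)

lemma canonical_no_black_leaves: "canonical t \<Longrightarrow> black_leaves t = 0 \<Longrightarrow> t = white"
  by (induction t) (auto split: if_splits)

lemma unary_canonical_iff_cyl:
  assumes "canonical t"
  shows "unary t \<longleftrightarrow> (\<exists>bs. t = cyl bs)"
proof
  show "unary t \<Longrightarrow> \<exists>bs. t = cyl bs"
    using assms unfolding unary_def
  proof (induction t)
    case (Lf b)
    then have "Lf b = cyl []" by (simp split: if_splits)
    then show ?case by blast
  next
    case (Nd l r)
    then have canon: "canonical l" "canonical r"
      and sum: "black_leaves l + black_leaves r = 1" by auto
    then consider "black_leaves l = 0" "black_leaves r = 1" | "black_leaves l = 1" "black_leaves r = 0"
      by linarith
    then show ?case
    proof cases
      case 1
      with Nd.IH(2) canon obtain bs where "r = cyl bs" by blast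
      moreover have "l = white" using 1 canon canonical_no_black_leaves by blast
      ultimately have "Nd l r = cyl (True # bs)" by simp
      then show ?thesis by blast
    next
      case 2
      with Nd.IH(1) canon obtain bs where "l = cyl bs" by blast
      moreover have "r = white" using 2 canon canonical_no_black_leaves by blast
      ultimately have "Nd l r = cyl (False # bs)" by simp
      then show ?thesis by blast
    qed
  qed
  have "black_leaves (cyl bs) = 1" for bs
    by (induction bs) auto
  then show "\<exists>bs. t = cyl bs \<Longrightarrow> unary t"
    by (auto simp: unary_def)
qed

text \<open>The stream with the first bit unread by t flipped lies in the other half; if that bit
  lies inside the prefix of the cylinder, the cylinder would be contained in one half.\<close>

lemma half_psubset_cylinder_swap:
  fixes k :: nat and p :: "nat \<Rightarrow> bool"
  defines "C \<equiv> {f. \<forall>i<k. f i = p i}"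
  assumes sub: "{f \<in> paths t. f (depth t f) = b} \<subset> C"
  shows "{f \<in> paths t. f (depth t f) = (\<not> b)} \<subset> C"
proof
  have flip: "f(depth t f := c) \<in> paths t \<and> depth t (f(depth t f := c)) = depth t f"
    if "f \<in> paths t" for f c
    using that depth_paths_local[of t f "f(depth t f := c)"] by auto
  show "{f \<in> paths t. f (depth t f) = (\<not> b)} \<subseteq> C"
  proof
    fix f assume "f \<in> {f \<in> paths t. f (depth t f) = (\<not> b)}"
    then have f: "f \<in> paths t" "f (depth t f) = (\<not> b)" by auto
    define d where "d = depth t f"
    define g where "g = f(d := b)"
    have g: "g \<in> paths t" "depth t g = d" "g d = b"
      using flip[OF f(1)] by (simp_all add: g_def d_def)
    with sub have gC: "g \<in> C" by auto
    show "f \<in> C"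
    proof (cases "d < k")
      case True
      have "C \<subseteq> {f \<in> paths t. f (depth t f) = b}"
      proof
        fix h assume "h \<in> C"
        then have "\<forall>i<k. h i = g i" using gC by (simp add: C_def)
        then have "\<forall>i<depth t g. h i = g i" "h d = g d" using True g(2) by auto
        then show "h \<in> {f \<in> paths t. f (depth t f) = b}"
          using depth_paths_local[of t g h] g by auto
      qed
      with sub show ?thesis by blast
    next
      case False
      then show ?thesis using gC by (simp add: C_def g_def)
    qed
  qed
  show "{f \<in> paths t. f (depth t f) = (\<not> b)} \<noteq> C"
  proof
    assume eq: "{f \<in> paths t. f (depth t f) = (\<not> b)} = C"
    have "p \<in> C" by (simp add: C_def)
    then have p: "p \<in> paths t" using eq by blast
    define g where "g = p(depth t p := b)"
    have "g \<in> {f \<in> paths t. f (depth t f) = b}" using flip[OF p] by (simp add: g_def)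
    with sub eq have "g (depth t g) = (\<not> b)" by blast
    then show False using flip[OF p] by (simp add: g_def)
  qed
qed

lemma unary_tsub_sides_iff:
  assumes "unary \<tau>" "canonical \<tau>"
  shows "tsub (bowtie t tL) \<tau> \<longleftrightarrow> tsub (bowtie t tR) \<tau>"
proof -
  obtain bs where \<tau>: "\<tau> = cyl bs" using assms unary_canonical_iff_cyl by blast
  have "tsub (bowtie t (cyl [b])) \<tau> \<longleftrightarrow> paths (bowtie t (cyl [b])) \<subset> paths \<tau>" for b
    by (rule tsub_iff_paths_psubset) (simp_all add: bowtie_def canonical_norm assms(2))
  then have sides: "tsub (bowtie t (cyl [b])) \<tau> \<longleftrightarrow>
      {f \<in> paths t. f (depth t f) = b} \<subset> {f. \<forall>i<length bs. f i = bs ! i}" for b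
    unfolding paths_bowtie_single \<tau> paths_cyl .
  have "tsub (bowtie t (cyl [b])) \<tau> \<Longrightarrow> tsub (bowtie t (cyl [\<not> b])) \<tau>" for b
    unfolding sides by (rule half_psubset_cylinder_swap)
  from this[of False] this[of True] show ?thesis
    unfolding tL_eq_cyl tR_eq_cyl by auto
qed

lemma cyl_Cons_subset_Nd_iff:
  "paths (cyl (c # bs)) \<subseteq> paths (Nd l r) \<longleftrightarrow> paths (cyl bs) \<subseteq> paths (if c then r else l)"
proof
  assume sub: "paths (cyl (c # bs)) \<subseteq> paths (Nd l r)"
  show "paths (cyl bs) \<subseteq> paths (if c then r else l)"
  proof
    fix f assume "f \<in> paths (cyl bs)"
    then have "case_nat c f \<in> paths (cyl (c # bs))" by (cases c) simp_all
    with sub have "case_nat c f \<in> paths (Nd l r)" by blast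
    then show "f \<in> paths (if c then r else l)" by (simp only: case_nat_in_paths_Nd)
  qed
next
  assume "paths (cyl bs) \<subseteq> paths (if c then r else l)"
  then show "paths (cyl (c # bs)) \<subseteq> paths (Nd l r)"
    by (cases c) auto
qed

lemma canonical_exposed_leaf:
  "canonical t \<Longrightarrow> t \<noteq> black \<Longrightarrow> t \<noteq> white \<Longrightarrow>
    \<exists>q b. paths (cyl (q @ [b])) \<subseteq> paths t \<and> \<not> paths (cyl (q @ [\<not> b])) \<subseteq> paths t"
proof (induction t)
  case (Nd l r)
  let ?child = "\<lambda>c. if c then r else l"
  let ?exposed = "\<lambda>t q b. paths (cyl (q @ [b])) \<subseteq> paths t \<and> \<not> paths (cyl (q @ [\<not> b])) \<subseteq> paths t"
  have canon_l: "canonical l" and canon_r: "canonical r"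
    using Nd.prems by simp_all
  then have canon: "canonical (?child c)" for c
    by simp
  have extend: "?exposed (Nd l r) (c # q) b" if "?exposed (?child c) q b" for c q b
    using that unfolding append_Cons cyl_Cons_subset_Nd_iff .
  have leaf: "?exposed (Nd l r) [] c" if "?child c = black" for c
  proof -
    have "?child (\<not> c) \<noteq> black"
      using that Nd.prems by (cases c) auto
    then have "paths (?child (\<not> c)) \<noteq> paths (cyl [])"
      using canonical_paths_inject canon canonical_cyl by (metis cyl.simps(1))
    then have "\<not> paths (cyl []) \<subseteq> paths (?child (\<not> c))"
      by (simp add: top.extremum_unique)
    moreover have "paths (cyl []) \<subseteq> paths (?child c)"
      using that by simp
    ultimately show ?thesis
      unfolding append_Nil cyl_Cons_subset_Nd_iff by blast
  qed
  consider "l = black" | "r = black" | l' r' where "l = Nd l' r'" | l' r' where "r = Nd l' r'"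
    using Nd.prems(1) by (metis (full_types) canonical.simps(2) tree.exhaust)
  then show ?case
  proof cases
    case 1
    then show ?thesis using leaf[of False, unfolded if_False] by blast
  next
    case 2
    then show ?thesis using leaf[of True, unfolded if_True] by blast
  next
    case 3
    then obtain q b where "?exposed l q b" using Nd.IH(1)[OF canon_l] by auto
    then show ?thesis using extend[where c=False, unfolded if_False] by blast
  next
    case 4
    then obtain q b where "?exposed r q b" using Nd.IH(2)[OF canon_r] by auto
    then show ?thesis using extend[where c=True, unfolded if_True] by blast
  qed
qed simp

lemma not_unary_tsub_sides_differ:
  assumes "canonical \<tau>" "\<tau> \<noteq> white" "\<not> unary \<tau>"
  obtains q where "tsub (cyl (q @ [False])) \<tau> \<noteq> tsub (cyl (q @ [True])) \<tau>"
proof -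
  have "\<tau> \<noteq> black"
    using assms(3) by (auto simp: unary_def)
  then obtain q b where q: "paths (cyl (q @ [b])) \<subseteq> paths \<tau>" "\<not> paths (cyl (q @ [\<not> b])) \<subseteq> paths \<tau>"
    using canonical_exposed_leaf[OF assms(1) _ assms(2)] by blast
  have "cyl (q @ [b]) \<noteq> \<tau>" using assms(1,3) unary_canonical_iff_cyl by blast
  with q(1) have "paths (cyl (q @ [b])) \<subset> paths \<tau>"
    using canonical_paths_inject[OF canonical_cyl assms(1)] by blast
  with q(2) have "tsub (cyl (q @ [b])) \<tau>" "\<not> tsub (cyl (q @ [\<not> b])) \<tau>"
    using tsub_iff_paths_psubset[OF canonical_cyl assms(1)] by auto
  then show ?thesis using that by (cases b) auto
qed

theorem lemma4:
  assumes "\<tau> \<in> tshares"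
  shows "unary \<tau> \<longleftrightarrow>
    (\<tau> \<noteq> white \<and>
     (\<forall>\<tau>' \<in> tshares. tsub (bowtie \<tau>' tL) \<tau> \<longleftrightarrow> tsub (bowtie \<tau>' tR) \<tau>))"
proof -
  have canon: "canonical \<tau>" using assms by (simp add: tshares_def)
  show ?thesis
  proof
    assume u: "unary \<tau>"
    then have "\<tau> \<noteq> white" by (auto simp: unary_def)
    with u show "\<tau> \<noteq> white \<and> (\<forall>\<tau>' \<in> tshares. tsub (bowtie \<tau>' tL) \<tau> \<longleftrightarrow> tsub (bowtie \<tau>' tR) \<tau>)"
      using unary_tsub_sides_iff canon by blast
  next
    assume sides: "\<tau> \<noteq> white \<and> (\<forall>\<tau>' \<in> tshares. tsub (bowtie \<tau>' tL) \<tau> \<longleftrightarrow> tsub (bowtie \<tau>' tR) \<tau>)"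
    show "unary \<tau>"
    proof (rule ccontr)
      assume "\<not> unary \<tau>"
      with canon sides obtain q where "tsub (cyl (q @ [False])) \<tau> \<noteq> tsub (cyl (q @ [True])) \<tau>"
        using not_unary_tsub_sides_differ by blast
      moreover have "cyl q \<in> tshares" by (simp add: tshares_def canonical_cyl)
      ultimately show False
        using sides by (metis tL_eq_cyl tR_eq_cyl bowtie_cyl)
    qed
  qed
qed

end
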